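(* Let a countable group $G$ act freely and continuously on a zero-dimensional Polish space $X$. Let $E$ be a finite $G$-clopen equivalence relation on $X$ and suppose there is a finite set $K\subseteq G$ with $[x]_E\subseteq K\cdot x$ for all $x\in X$. Then there is a continuous, $G$-clopen function $S:X\to X$ (a selector for $E$) such that for all $x,y\in X$, $x\mathrel{E}S(x)$, and $x\mathrel{E}y\iff S(x)=S(y)$.
   Context: A relation $R\subseteq X\times X$ (in particular the graph $\{(x,S(x))\}$ of a function $S$) is $G$-clopen if for every $g\in G$ the set $\{x\in X:(x,g\cdot x)\in R\}$ is clopen. $E$ is finite if each class $[x]_E$ is finite. *)

theory Defs
  imports "HOL-Analysis.Analysis" "HOL-Algebra.Group_Action"
begin

definition zero_dimensional :: "'x::topological_space itself \<Rightarrow> bool" where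
  "zero_dimensional _ \<longleftrightarrow>
     (\<exists>B :: 'x set set. topological_basis B \<and> (\<forall>b\<in>B. open b \<and> closed b))"

definition G_clopen :: "('g, 'b) monoid_scheme \<Rightarrow> ('g \<Rightarrow> 'x::topological_space \<Rightarrow> 'x) \<Rightarrow> ('x \<times> 'x) set \<Rightarrow> bool" where
  "G_clopen G \<phi> R \<longleftrightarrow>
     (\<forall>g\<in>carrier G. open {x. (x, \<phi> g x) \<in> R} \<and> closed {x. (x, \<phi> g x) \<in> R})"

definition graph_of :: "('x \<Rightarrow> 'x) \<Rightarrow> ('x \<times> 'x) set" where
  "graph_of S = {(x, S x) | x. True}"

end

theory Submission
  imports Defs "HOL-Library.Fun_Lexorder"
begin

text \<open>A second countable zero-dimensional space has countably many clopen sets \<open>D n\<close> separating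
  points, so \<open>x \<mapsto> (\<lambda>n. x \<in> D n)\<close> embeds it into Cantor space, whose lexicographic order pulls
  back to a linear order on the space in which every strict comparison \<open>g\<cdot>y < h\<cdot>y\<close> of two
  translates is an open condition on \<open>y\<close>, being decided by finitely many clopen coordinates. Let \<open>S x\<close> be the least element of the class of \<open>x\<close>.
  Since \<open>E\<close> is \<open>G\<close>-clopen and \<open>K\<close> is finite, near any point the class of \<open>y\<close> is \<open>A\<cdot>y\<close> for a
  fixed finite \<open>A \<subseteq> K\<close>; by freeness the points \<open>k\<cdot>x\<close>, \<open>k \<in> A\<close>, are distinct, and by openness
  the same \<open>k\<^sub>0 \<in> A\<close> gives the minimum nearby. So \<open>S\<close> is locally a translation \<open>\<phi> k\<^sub>0\<close>, which
  makes it continuous and, again by freeness, \<open>G\<close>-clopen.\<close>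

lemma zero_dimensional_separating_clopens:
  assumes "zero_dimensional TYPE('x)"
  obtains D :: "nat \<Rightarrow> 'x::{second_countable_topology, t1_space} set"
  where "\<And>n. open (D n)" "\<And>n. closed (D n)" "\<And>x y. x \<noteq> y \<Longrightarrow> \<exists>n. (x \<in> D n) \<noteq> (y \<in> D n)"
proof -
  obtain B :: "'x set set" where B: "topological_basis B" "\<And>b. b \<in> B \<Longrightarrow> open b \<and> closed b"
    using assms unfolding zero_dimensional_def by blast
  obtain C :: "'x set set" where C: "countable C" "topological_basis C"
    using ex_countable_basis by blast
  have "\<forall>c\<in>C. \<exists>F. F \<subseteq> B \<and> countable F \<and> \<Union>F = c"
  proof
    fix c
    assume "c \<in> C"
    then have "open c"
      using C(2) topological_basis_open by blast
    then obtain B' where B': "B' \<subseteq> B" "\<Union>B' = c"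
      using B(1) unfolding topological_basis_def by blast
    obtain F where "F \<subseteq> B'" "countable F" "\<Union>F = \<Union>B'"
      by (rule Lindelof[of B']) (use B' B(2) in blast)
    with B' show "\<exists>F. F \<subseteq> B \<and> countable F \<and> \<Union>F = c"
      by (intro exI[of _ F]) auto
  qed
  then obtain F where F: "\<forall>c\<in>C. F c \<subseteq> B \<and> countable (F c) \<and> \<Union>(F c) = c"
    by (rule bchoice[THEN exE])
  define \<D> where "\<D> = insert {} (\<Union>c\<in>C. F c)"
  have "countable \<D>"
    unfolding \<D>_def using F by (intro countable_insert countable_UN[OF C(1)]) blast
  have "\<D> \<subseteq> insert {} B"
    unfolding \<D>_def using F by blast
  show thesis
  proof
    fix n
    have "from_nat_into \<D> n \<in> insert {} B"
      using from_nat_into[of \<D> n] \<open>\<D> \<subseteq> insert {} B\<close> unfolding \<D>_def by blast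
    then show "open (from_nat_into \<D> n)" "closed (from_nat_into \<D> n)"
      using B(2) by auto
  next
    fix x y :: 'x
    assume "x \<noteq> y"
    then obtain U where U: "open U" "x \<in> U" "y \<notin> U"
      by (meson separation_t1)
    obtain c where c: "c \<in> C" "x \<in> c" "c \<subseteq> U"
      by (rule topological_basisE[OF C(2) U(1,2)])
    then have "x \<in> \<Union>(F c)"
      using F by simp
    then obtain b where b: "b \<in> F c" "x \<in> b"
      by blast
    then have "b \<subseteq> U" "b \<in> \<D>"
      using F c unfolding \<D>_def by auto
    then obtain n where "from_nat_into \<D> n = b"
      using from_nat_into_surj[OF \<open>countable \<D>\<close>] by blast
    with b(2) \<open>b \<subseteq> U\<close> U(3) show "\<exists>n. (x \<in> from_nat_into \<D> n) \<noteq> (y \<in> from_nat_into \<D> n)"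
      by blast
  qed
qed

lemma less_fun_linear:
  fixes f g :: "'a::wellorder \<Rightarrow> 'b::linorder"
  assumes "f \<noteq> g"
  shows "less_fun f g \<or> less_fun g f"
proof -
  define k where "k = (LEAST k. f k \<noteq> g k)"
  have "\<exists>k. f k \<noteq> g k"
    using assms by (auto simp: fun_eq_iff)
  then have "f k \<noteq> g k"
    unfolding k_def by (rule LeastI_ex)
  have agree: "f k' = g k'" if "k' < k" for k'
    using that not_less_Least unfolding k_def by blast
  from \<open>f k \<noteq> g k\<close> consider "f k < g k" | "g k < f k"
    by (meson neq_iff)
  then show ?thesis
  proof cases
    case 1
    with agree show ?thesis
      by (intro disjI1 less_funI exI[of _ k]) auto
  next
    case 2
    with agree show ?thesis
      by (intro disjI2 less_funI exI[of _ k]) auto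
  qed
qed

lemma linorder_less_fun_inv_image:
  fixes c :: "'x \<Rightarrow> 'a::wellorder \<Rightarrow> 'b::linorder"
  assumes "inj c"
  shows "class.linorder (\<lambda>x y. less_fun (c x) (c y) \<or> x = y) (\<lambda>x y. less_fun (c x) (c y))"
proof (rule linorder_strictI)
  show "class.order (\<lambda>x y. less_fun (c x) (c y) \<or> x = y) (\<lambda>x y. less_fun (c x) (c y))"
  proof (rule order_strictI)
    show "less_fun (c x) (c y) \<Longrightarrow> \<not> less_fun (c y) (c x)" for x y
      by (rule less_fun_asym)
    show "\<not> less_fun (c x) (c x)" for x
      by (rule less_fun_irrefl)
    show "less_fun (c x) (c z)" if "less_fun (c x) (c y)" "less_fun (c y) (c z)" for x y z
      using that by (rule less_fun_trans)
  qed simp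
  show "less_fun (c x) (c y) \<or> x = y \<or> less_fun (c y) (c x)" for x y
    using less_fun_linear[of "c x" "c y"] injD[OF assms, of x y] by blast
qed

lemma open_Collect_iff:
  assumes "open {x. P x}" "closed {x. P x}" "open {x. Q x}" "closed {x. Q x}"
  shows "open {x. P x \<longleftrightarrow> Q x}"
  unfolding iff_conv_conj_imp using assms by (intro open_Collect_conj open_Collect_imp)

lemma open_Collect_finite_ball:
  assumes "finite K" "\<And>k. k \<in> K \<Longrightarrow> open {x. P k x}"
  shows "open {x. \<forall>k\<in>K. P k x}"
proof -
  have "{x. \<forall>k\<in>K. P k x} = (\<Inter>k\<in>K. {x. P k x})"
    by auto
  then show ?thesis
    using open_INT[of K "\<lambda>k. {x. P k x}"] assms by simp
qed

lemma open_Collect_less_fun: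
  fixes F H :: "'a::topological_space \<Rightarrow> nat \<Rightarrow> bool"
  assumes "\<And>n. open {x. F x n} \<and> closed {x. F x n}" "\<And>n. open {x. H x n} \<and> closed {x. H x n}"
  shows "open {x. less_fun (F x) (H x)}"
proof -
  have "{x. less_fun (F x) (H x)} = {x. \<exists>n. \<not> F x n \<and> H x n \<and> (\<forall>m\<in>{..<n}. F x m \<longleftrightarrow> H x m)}"
    unfolding less_fun_def by auto
  also have "open \<dots>"
    using assms
    by (intro open_Collect_ex open_Collect_conj open_Collect_neg open_Collect_finite_ball
        open_Collect_iff finite_lessThan) auto
  finally show ?thesis .
qed

lemma zero_dimensional_open_linorder:
  assumes "zero_dimensional TYPE('x)"
  obtains lt :: "'x::{second_countable_topology, t1_space} \<Rightarrow> 'x \<Rightarrow> bool"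
  where "class.linorder (\<lambda>x y. lt x y \<or> x = y) lt"
    "\<And>f g :: 'a::topological_space \<Rightarrow> 'x.
      continuous_on UNIV f \<Longrightarrow> continuous_on UNIV g \<Longrightarrow> open {y. lt (f y) (g y)}"
proof -
  obtain D :: "nat \<Rightarrow> 'x set" where D: "\<And>n. open (D n)" "\<And>n. closed (D n)"
    and sep: "\<And>x y. x \<noteq> y \<Longrightarrow> \<exists>n. (x \<in> D n) \<noteq> (y \<in> D n)"
    using zero_dimensional_separating_clopens[OF assms] by blast
  define code where "code x = (\<lambda>n. x \<in> D n)" for x
  have "inj code"
  proof (rule injI)
    fix x y
    assume "code x = code y"
    then have "\<forall>n. (x \<in> D n) = (y \<in> D n)"
      unfolding code_def by meson
    then show "x = y"
      using sep by blast
  qed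
  show thesis
  proof (rule that[of "\<lambda>x y. less_fun (code x) (code y)"])
    show "class.linorder (\<lambda>x y. less_fun (code x) (code y) \<or> x = y) (\<lambda>x y. less_fun (code x) (code y))"
      using \<open>inj code\<close> by (rule linorder_less_fun_inv_image)
    fix f g :: "'a \<Rightarrow> 'x"
    assume "continuous_on UNIV f" "continuous_on UNIV g"
    then have "open {y. h y \<in> D n} \<and> closed {y. h y \<in> D n}" if "h = f \<or> h = g" for h n
      using that open_vimage[OF D(1)] closed_vimage[OF D(2)] by (auto simp: vimage_def)
    then show "open {y. less_fun (code (f y)) (code (g y))}"
      unfolding code_def by (intro open_Collect_less_fun) blast+
  qed
qed

lemma (in group_action) free_action_cancel:
  assumes "stabilizer G \<phi> x = {\<one>\<^bsub>G\<^esub>}" "x \<in> E" "g \<in> carrier G" "h \<in> carrier G" "\<phi> g x = \<phi> h x"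
  shows "g = h"
proof -
  interpret group G
    using group_hom group_hom.axioms(1) by blast
  have "\<phi> (inv h) (\<phi> g x) = x"
    using orbit_sym_aux[OF assms(4,2) assms(5)[symmetric]] .
  then have "\<phi> (inv h \<otimes> g) x = x"
    using composition_rule[OF assms(2) inv_closed[OF assms(4)] assms(3)] by simp
  then have "inv h \<otimes> g \<in> stabilizer G \<phi> x"
    unfolding stabilizer_def using assms(3,4) by simp
  then have "inv h \<otimes> g = \<one>"
    using assms(1) by simp
  then show "g = h"
    using inv_solve_left'[of \<one> h g] assms(3,4) by simp
qed

lemma class_choice_selector:
  assumes E: "equiv UNIV E" and sel: "\<And>x. sel (E `` {x}) \<in> E `` {x}"
  shows "(x, sel (E `` {x})) \<in> E" "(x, y) \<in> E \<longleftrightarrow> sel (E `` {x}) = sel (E `` {y})"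
proof -
  show "(x, sel (E `` {x})) \<in> E"
    using sel by blast
  show "(x, y) \<in> E \<longleftrightarrow> sel (E `` {x}) = sel (E `` {y})"
  proof
    assume "(x, y) \<in> E"
    then show "sel (E `` {x}) = sel (E `` {y})"
      using equiv_class_eq_iff[OF E] by simp
  next
    assume "sel (E `` {x}) = sel (E `` {y})"
    then have "sel (E `` {x}) \<in> E `` {x} \<inter> E `` {y}"
      using sel[of x] sel[of y] by simp
    then show "(x, y) \<in> E"
      by (rule equiv_class_nondisjoint[OF E])
  qed
qed

lemma finite_class_locally_uniform:
  fixes \<phi> :: "'g \<Rightarrow> 'x::topological_space \<Rightarrow> 'x"
  assumes "finite K"
    and clopen: "\<And>k. k \<in> K \<Longrightarrow> open {y. (y, \<phi> k y) \<in> E} \<and> closed {y. (y, \<phi> k y) \<in> E}"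
    and EK: "\<And>y. E `` {y} \<subseteq> (\<lambda>k. \<phi> k y) ` K"
  obtains V A where "open V" "x \<in> V" "A \<subseteq> K" "\<And>y. y \<in> V \<Longrightarrow> E `` {y} = (\<lambda>k. \<phi> k y) ` A"
proof
  define A where "A = {k\<in>K. (x, \<phi> k x) \<in> E}"
  define V where "V = {y. \<forall>k\<in>K. (y, \<phi> k y) \<in> E \<longleftrightarrow> k \<in> A}"
  show "open V"
    unfolding V_def using \<open>finite K\<close> clopen
    by (intro open_Collect_finite_ball open_Collect_iff open_Collect_const closed_Collect_const) auto
  show "x \<in> V" "A \<subseteq> K"
    unfolding V_def A_def by auto
  show "E `` {y} = (\<lambda>k. \<phi> k y) ` A" if "y \<in> V" for y
  proof
    show "E `` {y} \<subseteq> (\<lambda>k. \<phi> k y) ` A"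
      using EK[of y] that unfolding V_def A_def by fastforce
    show "(\<lambda>k. \<phi> k y) ` A \<subseteq> E `` {y}"
      using that unfolding V_def A_def by auto
  qed
qed

lemma Min_image_locally_attained:
  fixes \<phi> :: "'g \<Rightarrow> 'a::topological_space \<Rightarrow> 'x"
    and le lt :: "'x \<Rightarrow> 'x \<Rightarrow> bool"
  assumes lin: "class.linorder le lt"
    and "finite A" "A \<noteq> {}"
    and open_lt: "\<And>g h. g \<in> A \<Longrightarrow> h \<in> A \<Longrightarrow> open {y. lt (\<phi> g y) (\<phi> h y)}"
    and inj: "inj_on (\<lambda>k. \<phi> k x) A"
  obtains U k where "open U" "x \<in> U" "k \<in> A"
    "\<And>y. y \<in> U \<Longrightarrow> linorder.Min le ((\<lambda>k. \<phi> k y) ` A) = \<phi> k y"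
proof -
  interpret ord: linorder le lt
    by (fact lin)
  have "ord.Min ((\<lambda>k. \<phi> k x) ` A) \<in> (\<lambda>k. \<phi> k x) ` A"
    using \<open>finite A\<close> \<open>A \<noteq> {}\<close> by (intro ord.Min_in) auto
  then obtain k where k: "k \<in> A" "ord.Min ((\<lambda>k. \<phi> k x) ` A) = \<phi> k x"
    by auto
  define U where "U = {y. \<forall>h\<in>A - {k}. lt (\<phi> k y) (\<phi> h y)}"
  have "open U"
    unfolding U_def using \<open>finite A\<close> k(1) open_lt by (intro open_Collect_finite_ball) auto
  moreover have "x \<in> U"
  proof -
    have "lt (\<phi> k x) (\<phi> h x)" if "h \<in> A - {k}" for h
    proof -
      have "le (\<phi> k x) (\<phi> h x)"
        using k \<open>finite A\<close> that by (metis DiffD1 finite_imageI image_eqI ord.Min_le)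
      moreover have "\<phi> k x \<noteq> \<phi> h x"
        using inj k(1) that by (auto dest: inj_onD)
      ultimately show ?thesis
        by (simp add: ord.order.not_eq_order_implies_strict)
    qed
    then show ?thesis
      unfolding U_def by blast
  qed
  moreover have "ord.Min ((\<lambda>k. \<phi> k y) ` A) = \<phi> k y" if "y \<in> U" for y
    using that k(1) \<open>finite A\<close> unfolding U_def
    by (intro ord.Min_eqI) (auto intro: ord.less_imp_le)
  ultimately show thesis
    using k(1) that by blast
qed

definition locally_translation ::
    "('g, 'b) monoid_scheme \<Rightarrow> ('g \<Rightarrow> 'x::topological_space \<Rightarrow> 'x) \<Rightarrow> ('x \<Rightarrow> 'x) \<Rightarrow> bool"
  where "locally_translation G \<phi> S \<longleftrightarrow>
    (\<forall>x. \<exists>U g. open U \<and> x \<in> U \<and> g \<in> carrier G \<and> (\<forall>y\<in>U. S y = \<phi> g y))"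

lemma Min_class_locally_translation:
  fixes \<phi> :: "'g \<Rightarrow> 'x::topological_space \<Rightarrow> 'x"
    and le lt :: "'x \<Rightarrow> 'x \<Rightarrow> bool"
  assumes lin: "class.linorder le lt"
    and open_lt: "\<And>g h. g \<in> carrier G \<Longrightarrow> h \<in> carrier G \<Longrightarrow> open {y. lt (\<phi> g y) (\<phi> h y)}"
    and cancel: "\<And>g h x. g \<in> carrier G \<Longrightarrow> h \<in> carrier G \<Longrightarrow> \<phi> g x = \<phi> h x \<Longrightarrow> g = h"
    and E_refl: "\<And>x. (x, x) \<in> E"
    and Eclo: "G_clopen G \<phi> E"
    and K: "K \<subseteq> carrier G" "finite K"
    and EK: "\<And>x. E `` {x} \<subseteq> (\<lambda>g. \<phi> g x) ` K"
  shows "locally_translation G \<phi> (\<lambda>x. linorder.Min le (E `` {x}))"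
  unfolding locally_translation_def
proof
  fix x
  have "open {y. (y, \<phi> k y) \<in> E} \<and> closed {y. (y, \<phi> k y) \<in> E}" if "k \<in> K" for k
    using Eclo K(1) that unfolding G_clopen_def by blast
  then obtain V A where V: "open V" "x \<in> V" "A \<subseteq> K" "\<And>y. y \<in> V \<Longrightarrow> E `` {y} = (\<lambda>k. \<phi> k y) ` A"
    using finite_class_locally_uniform[OF K(2) _ EK, where x = x] by blast
  have "finite A"
    using V(3) K(2) by (rule finite_subset)
  have "A \<subseteq> carrier G"
    using V(3) K(1) by (rule order_trans)
  have "A \<noteq> {}"
    using V(4)[OF V(2)] E_refl[of x] by auto
  have "inj_on (\<lambda>k. \<phi> k x) A"
    by (rule inj_onI) (use \<open>A \<subseteq> carrier G\<close> cancel in blast)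
  moreover have "open {y. lt (\<phi> g y) (\<phi> h y)}" if "g \<in> A" "h \<in> A" for g h
    using that \<open>A \<subseteq> carrier G\<close> by (intro open_lt) auto
  ultimately obtain U k where U: "open U" "x \<in> U" "k \<in> A"
    "\<And>y. y \<in> U \<Longrightarrow> linorder.Min le ((\<lambda>k. \<phi> k y) ` A) = \<phi> k y"
    using Min_image_locally_attained[OF lin \<open>finite A\<close> \<open>A \<noteq> {}\<close>] by blast
  have "\<forall>y\<in>U \<inter> V. linorder.Min le (E `` {y}) = \<phi> k y"
    using U(4) V(4) by simp
  then show "\<exists>U g. open U \<and> x \<in> U \<and> g \<in> carrier G \<and> (\<forall>y\<in>U. linorder.Min le (E `` {y}) = \<phi> g y)"
    using U(1-3) V(1,2) \<open>A \<subseteq> carrier G\<close> by (intro exI[of _ "U \<inter> V"] exI[of _ k]) auto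
qed

lemma continuous_on_locally_translation:
  assumes "locally_translation G \<phi> S" "\<And>g. g \<in> carrier G \<Longrightarrow> continuous_on UNIV (\<phi> g)"
  shows "continuous_on UNIV S"
proof -
  define \<U> where "\<U> = {U. open U \<and> (\<exists>g\<in>carrier G. \<forall>y\<in>U. S y = \<phi> g y)}"
  have "continuous_on U S" if U: "U \<in> \<U>" for U
  proof -
    obtain g where g: "g \<in> carrier G" "\<forall>y\<in>U. S y = \<phi> g y"
      using U unfolding \<U>_def by blast
    have "continuous_on U (\<phi> g)"
      using continuous_on_subset[OF assms(2)[OF g(1)]] by blast
    moreover have "continuous_on U S \<longleftrightarrow> continuous_on U (\<phi> g)"
      by (rule continuous_on_cong) (simp_all add: g(2))
    ultimately show ?thesis
      by blast
  qed
  moreover have "\<Union>\<U> = UNIV"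
    using assms(1) unfolding locally_translation_def \<U>_def by blast
  ultimately show ?thesis
    using continuous_on_open_Union[of \<U> S] unfolding \<U>_def by force
qed

lemma G_clopen_graph_locally_translation:
  assumes "locally_translation G \<phi> S"
    and free: "\<And>g h x. g \<in> carrier G \<Longrightarrow> h \<in> carrier G \<Longrightarrow> \<phi> g x = \<phi> h x \<Longrightarrow> g = h"
  shows "G_clopen G \<phi> (graph_of S)"
  unfolding G_clopen_def
proof (intro ballI conjI)
  fix g
  assume g: "g \<in> carrier G"
  have graph: "{x. (x, \<phi> g x) \<in> graph_of S} = {x. S x = \<phi> g x}"
    unfolding graph_of_def by auto
  have nbhd: "\<exists>T. open T \<and> x \<in> T \<and> T \<subseteq> {x. S x = \<phi> g x \<longleftrightarrow> b}" if "S x = \<phi> g x \<longleftrightarrow> b" for x b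
  proof -
    obtain U h where U: "open U" "x \<in> U" "h \<in> carrier G" "\<forall>y\<in>U. S y = \<phi> h y"
      using assms(1) unfolding locally_translation_def by blast
    have "S y = \<phi> g y \<longleftrightarrow> h = g" if "y \<in> U" for y
      using U(4) that free[OF U(3) g] by auto
    then have "U \<subseteq> {x. S x = \<phi> g x \<longleftrightarrow> b}"
      using that U(2) by auto
    with U(1,2) show ?thesis
      by blast
  qed
  show "open {x. (x, \<phi> g x) \<in> graph_of S}"
    unfolding graph using nbhd[of _ True] by (intro Topological_Spaces.openI) simp
  show "closed {x. (x, \<phi> g x) \<in> graph_of S}"
    unfolding graph closed_def Collect_neg_eq[symmetric] using nbhd[of _ False]
    by (intro Topological_Spaces.openI) simp
qed

theorem lemma3p6:
  fixes G :: "('g, 'b) monoid_scheme"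
    and \<phi> :: "'g \<Rightarrow> 'x::polish_space \<Rightarrow> 'x"
    and E :: "('x \<times> 'x) set"
    and K :: "'g set"
  assumes act: "group_action G (UNIV :: 'x set) \<phi>"
    and cnt: "countable (carrier G)"
    and free: "\<And>x. stabilizer G \<phi> x = {\<one>\<^bsub>G\<^esub>}"
    and cont: "\<And>g. g \<in> carrier G \<Longrightarrow> continuous_on UNIV (\<phi> g)"
    and zd: "zero_dimensional TYPE('x)"
    and eqv: "equiv UNIV E"
    and fin: "\<And>x. finite (E `` {x})"
    and Eclo: "G_clopen G \<phi> E"
    and K: "K \<subseteq> carrier G" "finite K"
    and EK: "\<And>x. E `` {x} \<subseteq> (\<lambda>g. \<phi> g x) ` K"
  shows "\<exists>S :: 'x \<Rightarrow> 'x. continuous_on UNIV S \<and> G_clopen G \<phi> (graph_of S) \<and>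
           (\<forall>x. (x, S x) \<in> E) \<and> (\<forall>x y. (x, y) \<in> E \<longleftrightarrow> S x = S y)"
proof -
  obtain lt :: "'x \<Rightarrow> 'x \<Rightarrow> bool" where lin: "class.linorder (\<lambda>x y. lt x y \<or> x = y) lt"
    and open_lt: "\<And>f g :: 'x \<Rightarrow> 'x.
      continuous_on UNIV f \<Longrightarrow> continuous_on UNIV g \<Longrightarrow> open {y. lt (f y) (g y)}"
    using zero_dimensional_open_linorder[OF zd] by blast
  interpret lex: linorder "\<lambda>x y. lt x y \<or> x = y" lt
    by (fact lin)
  have cancel: "g = h" if "g \<in> carrier G" "h \<in> carrier G" "\<phi> g x = \<phi> h x" for g h x
    by (rule group_action.free_action_cancel[OF act free UNIV_I that])
  have E_refl: "(x, x) \<in> E" for x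
    using eqv by (auto simp: equiv_def refl_on_def)
  define S where "S x = lex.Min (E `` {x})" for x
  have local: "locally_translation G \<phi> S"
    unfolding S_def using lin open_lt[OF cont cont] cancel E_refl Eclo K EK
    by (rule Min_class_locally_translation)
  have "lex.Min (E `` {x}) \<in> E `` {x}" for x
    using lex.Min_in[OF fin] E_refl by blast
  then have "(x, S x) \<in> E" "(x, y) \<in> E \<longleftrightarrow> S x = S y" for x y
    unfolding S_def by (rule class_choice_selector[OF eqv])+
  moreover have "continuous_on UNIV S"
    using local cont by (rule continuous_on_locally_translation)
  moreover have "G_clopen G \<phi> (graph_of S)"
    using local cancel by (rule G_clopen_graph_locally_translation)
  ultimately show ?thesis
    by (intro exI[of _ S]) auto
qed

end
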